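(* Let $I,J\subseteq\mathbb{R}$ be finite nonempty subsets and let $a=(a_i: i\in I)$ and $b=(b_j: j\in J)$ be two sequences of non-negative real numbers. For each $t\in I+J$, let $u_t(a,b)=\max\{a_i+b_{t-i}: i\in I,\ t-i\in J\}$. Then $$\frac{1}{|I|+|J|-1}\sum_{t\in I+J}u_t(a,b)\ \ge\ \frac{1}{|I|}\sum_{i\in I}a_i+\frac{1}{|J|}\sum_{j\in J}b_j.$$ Moreover, if $\min(|I|,|J|)\ge 2$ and $a_i>0$, $b_j>0$ for all $i\in I$, $j\in J$, then equality holds if and only if $I$ and $J$ are arithmetic progressions with a common difference and the sequences $a$ and $b$ (indexed in increasing order of $I$ and $J$) are arithmetic progressions with a common difference.
   Context: $I+J=\{i+j: i\in I, j\in J\}$. *)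

theory Defs
  imports Main "HOL.Real"
begin

definition sumset :: "real set \<Rightarrow> real set \<Rightarrow> real set" where
  "sumset I J = {i + j | i j. i \<in> I \<and> j \<in> J}"

definition u_max :: "real set \<Rightarrow> real set \<Rightarrow> (real \<Rightarrow> real) \<Rightarrow> (real \<Rightarrow> real) \<Rightarrow> real \<Rightarrow> real" where
  "u_max I J a b t = Max {a i + b (t - i) | i. i \<in> I \<and> t - i \<in> J}"

end

theory Submission
  imports Defs
begin

text \<open>Let \<open>x = min I\<close> and \<open>y = min J\<close>. Removing \<open>y\<close> from \<open>J\<close> lowers the sum of the \<open>u\<^sub>t\<close> by at
  least \<open>a\<^sub>x + b\<^sub>y\<close>: the smallest element \<open>x + y\<close> of \<open>I + J\<close> disappears, and the remaining maxima
  can only decrease; the same holds for removing \<open>x\<close> from \<open>I\<close>. The bound of the theorem,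
  multiplied by \<open>|I| + |J| - 2\<close>, is exactly the combination with weights \<open>|J| - 1\<close> and \<open>|I| - 1\<close>
  of the bounds for the two smaller pairs, each increased by \<open>a\<^sub>x + b\<^sub>y\<close>, so the inequality follows
  by induction on \<open>|I| + |J|\<close>. In the case of equality both removals are tight; inductively
  this forces every \<open>u\<^sub>i\<^sub>+\<^sub>j\<close> to equal \<open>a\<^sub>i + b\<^sub>j\<close> and all gaps between consecutive elements of
  \<open>I\<close> and \<open>J\<close>, together with the corresponding increments of \<open>a\<close> and \<open>b\<close>, to coincide.\<close>

lemma sumset_commute: "sumset I J = sumset J I"
  unfolding sumset_def by (auto; metis add.commute)

lemma finite_sumset: "finite I \<Longrightarrow> finite J \<Longrightarrow> finite (sumset I J)"
proof -
  assume "finite I" "finite J"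
  have "sumset I J = (\<lambda>(i, j). i + j) ` (I \<times> J)" unfolding sumset_def by auto
  then show ?thesis using \<open>finite I\<close> \<open>finite J\<close> by simp
qed

lemma u_max_eq_Max_image:
  "u_max I J a b t = Max ((\<lambda>i. a i + b (t - i)) ` {i \<in> I. t - i \<in> J})"
  unfolding u_max_def by (rule arg_cong[where f = Max]) auto

lemma u_max_commute: "u_max I J a b = u_max J I b a"
proof
  fix t
  have "(\<lambda>i. a i + b (t - i)) ` {i \<in> I. t - i \<in> J} = (\<lambda>j. b j + a (t - j)) ` {j \<in> J. t - j \<in> I}"
    by (force intro: image_eqI[where x = "t - _"])
  then show "u_max I J a b t = u_max J I b a t" by (simp add: u_max_eq_Max_image)
qed

lemma u_max_attained:
  assumes "finite I" "t \<in> sumset I J"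
  obtains i where "i \<in> I" "t - i \<in> J" "u_max I J a b t = a i + b (t - i)"
proof -
  have "{i \<in> I. t - i \<in> J} \<noteq> {}" using assms(2) by (auto simp: sumset_def)
  then have "u_max I J a b t \<in> (\<lambda>i. a i + b (t - i)) ` {i \<in> I. t - i \<in> J}"
    unfolding u_max_eq_Max_image using assms(1) by (intro Max_in) auto
  then show thesis using that by blast
qed

lemma u_max_nonneg:
  assumes "finite I" "t \<in> sumset I J" "\<forall>i\<in>I. a i \<ge> 0" "\<forall>j\<in>J. b j \<ge> 0"
  shows "u_max I J a b t \<ge> 0"
  using assms by (metis add_nonneg_nonneg u_max_attained)

lemma u_max_pos:
  assumes "finite I" "t \<in> sumset I J" "\<forall>i\<in>I. a i > 0" "\<forall>j\<in>J. b j > 0"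
  shows "u_max I J a b t > 0"
  using assms by (metis add_pos_pos u_max_attained)

lemma u_max_mono:
  assumes "finite I" "J' \<subseteq> J" "t \<in> sumset I J'"
  shows "u_max I J' a b t \<le> u_max I J a b t"
proof -
  have "{i \<in> I. t - i \<in> J'} \<noteq> {}" using assms(3) by (auto simp: sumset_def)
  then show ?thesis unfolding u_max_eq_Max_image using assms(1,2) by (intro Max_mono) auto
qed

lemma u_max_Min_Min:
  assumes "finite I" "I \<noteq> {}" "finite J" "J \<noteq> {}"
  shows "u_max I J a b (Min I + Min J) = a (Min I) + b (Min J)"
proof -
  have "{i \<in> I. Min I + Min J - i \<in> J} = {Min I}"
  proof (intro equalityI subsetI)
    fix i assume "i \<in> {i \<in> I. Min I + Min J - i \<in> J}"
    then have "Min I \<le> i" "Min J \<le> Min I + Min J - i" using assms by auto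
    then show "i \<in> {Min I}" by simp
  qed (use assms in auto)
  then show ?thesis by (simp add: u_max_eq_Max_image)
qed

lemma sumset_remove_Min_subset:
  assumes "finite I" "finite J"
  shows "sumset I (J - {Min J}) \<subseteq> sumset I J - {Min I + Min J}"
proof
  fix t assume "t \<in> sumset I (J - {Min J})"
  then obtain i j where "i \<in> I" "j \<in> J" "j \<noteq> Min J" "t = i + j" by (auto simp: sumset_def)
  moreover have "Min I \<le> i" "Min J < j" using assms calculation by (auto simp: order_le_neq_trans)
  ultimately show "t \<in> sumset I J - {Min I + Min J}" by (auto simp: sumset_def)
qed

definition u_sum :: "real set \<Rightarrow> real set \<Rightarrow> (real \<Rightarrow> real) \<Rightarrow> (real \<Rightarrow> real) \<Rightarrow> real" where
  "u_sum I J a b = (\<Sum>t\<in>sumset I J. u_max I J a b t)"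

definition mean_bound :: "real set \<Rightarrow> real set \<Rightarrow> (real \<Rightarrow> real) \<Rightarrow> (real \<Rightarrow> real) \<Rightarrow> real" where
  "mean_bound I J a b =
     (real (card I) + real (card J) - 1) * (sum a I / real (card I) + sum b J / real (card J))"

lemma u_sum_commute: "u_sum I J a b = u_sum J I b a"
  unfolding u_sum_def by (simp add: sumset_commute[of I J] u_max_commute[of I J])

lemma mean_bound_commute: "mean_bound I J a b = mean_bound J I b a"
  unfolding mean_bound_def by (simp add: algebra_simps)

lemma u_sum_remove_Min_right:
  assumes fin: "finite I" "I \<noteq> {}" "finite J" "J \<noteq> {}"
  defines "J' \<equiv> J - {Min J}"
  shows "u_sum I J a b = a (Min I) + b (Min J) + u_sum I J' a b
           + (\<Sum>t\<in>sumset I J'. u_max I J a b t - u_max I J' a b t)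
           + (\<Sum>t\<in>sumset I J - sumset I J' - {Min I + Min J}. u_max I J a b t)"
proof -
  let ?S = "sumset I J" and ?S' = "sumset I J'" and ?u = "u_max I J a b"
  have "?S' \<subseteq> ?S - {Min I + Min J}"
    unfolding J'_def using fin by (intro sumset_remove_Min_subset)
  moreover have "Min I + Min J \<in> ?S" using fin by (auto simp: sumset_def intro: Min_in)
  moreover have "finite ?S" using fin by (simp add: finite_sumset)
  ultimately have "sum ?u ?S = ?u (Min I + Min J) + sum ?u (?S - {Min I + Min J} - ?S') + sum ?u ?S'"
    by (simp add: sum.remove sum.subset_diff[of ?S' "?S - {Min I + Min J}"])
  moreover have "?S - {Min I + Min J} - ?S' = ?S - ?S' - {Min I + Min J}" by blast
  ultimately have "sum ?u ?S = ?u (Min I + Min J) + sum ?u ?S' + sum ?u (?S - ?S' - {Min I + Min J})"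
    by simp
  then show ?thesis
    using fin by (simp add: u_sum_def u_max_Min_Min sum_subtractf)
qed

lemma u_sum_remove_Min_right_ge:
  assumes "finite I" "I \<noteq> {}" "finite J" "J \<noteq> {}" "\<forall>i\<in>I. a i \<ge> 0" "\<forall>j\<in>J. b j \<ge> 0"
  shows "a (Min I) + b (Min J) + u_sum I (J - {Min J}) a b \<le> u_sum I J a b"
proof -
  have "(\<Sum>t\<in>sumset I (J - {Min J}). u_max I J a b t - u_max I (J - {Min J}) a b t) \<ge> 0"
    using assms(1) by (intro sum_nonneg) (simp add: u_max_mono)
  moreover have "(\<Sum>t\<in>sumset I J - sumset I (J - {Min J}) - {Min I + Min J}. u_max I J a b t) \<ge> 0"
    using assms by (intro sum_nonneg) (simp add: u_max_nonneg)
  ultimately show ?thesis using u_sum_remove_Min_right[OF assms(1-4), of a b] by linarith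
qed

lemma u_sum_remove_Min_right_eq:
  assumes fin: "finite I" "I \<noteq> {}" "finite J" "J \<noteq> {}"
    and pos: "\<forall>i\<in>I. a i > 0" "\<forall>j\<in>J. b j > 0"
    and eq: "u_sum I J a b = a (Min I) + b (Min J) + u_sum I (J - {Min J}) a b"
  shows "sumset I (J - {Min J}) = sumset I J - {Min I + Min J}"
    and "\<forall>t\<in>sumset I (J - {Min J}). u_max I J a b t = u_max I (J - {Min J}) a b t"
proof -
  let ?J' = "J - {Min J}"
  let ?D = "sumset I ?J'" and ?R = "sumset I J - sumset I ?J' - {Min I + Min J}"
  have fin_S: "finite (sumset I J)" using fin by (simp add: finite_sumset)
  have D_sub: "?D \<subseteq> sumset I J - {Min I + Min J}"
    using fin by (intro sumset_remove_Min_subset)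
  have mono: "\<forall>t\<in>?D. u_max I J a b t - u_max I ?J' a b t \<ge> 0"
    using fin by (simp add: u_max_mono)
  have pos_R: "\<forall>t\<in>?R. u_max I J a b t > 0"
    using fin pos by (simp add: u_max_pos)
  have "(\<Sum>t\<in>?D. u_max I J a b t - u_max I ?J' a b t) + sum (u_max I J a b) ?R = 0"
    using u_sum_remove_Min_right[OF fin, of a b] eq by simp
  moreover have "(\<Sum>t\<in>?D. u_max I J a b t - u_max I ?J' a b t) \<ge> 0" "sum (u_max I J a b) ?R \<ge> 0"
    using mono pos_R by (auto intro: sum_nonneg less_imp_le)
  ultimately have sum_D: "(\<Sum>t\<in>?D. u_max I J a b t - u_max I ?J' a b t) = 0"
    and sum_R: "sum (u_max I J a b) ?R = 0" by linarith+
  have "?R = {}"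
  proof (rule ccontr)
    assume "?R \<noteq> {}"
    then have "sum (u_max I J a b) ?R > 0" using fin_S pos_R by (intro sum_pos) auto
    with sum_R show False by simp
  qed
  then show "?D = sumset I J - {Min I + Min J}" using D_sub by blast
  have "finite ?D" using D_sub fin_S finite_subset by blast
  then show "\<forall>t\<in>?D. u_max I J a b t = u_max I ?J' a b t"
    using sum_nonneg_eq_0_iff[OF \<open>finite ?D\<close>, of "\<lambda>t. u_max I J a b t - u_max I ?J' a b t"]
      sum_D mono by simp
qed

lemma u_sum_remove_Min_left_ge:
  assumes "finite I" "I \<noteq> {}" "finite J" "J \<noteq> {}" "\<forall>i\<in>I. a i \<ge> 0" "\<forall>j\<in>J. b j \<ge> 0"
  shows "a (Min I) + b (Min J) + u_sum (I - {Min I}) J a b \<le> u_sum I J a b"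
  using u_sum_remove_Min_right_ge[of J I b a] assms by (simp add: u_sum_commute[of J])

lemma u_sum_remove_Min_left_eq:
  assumes "finite I" "I \<noteq> {}" "finite J" "J \<noteq> {}" "\<forall>i\<in>I. a i > 0" "\<forall>j\<in>J. b j > 0"
    and "u_sum I J a b = a (Min I) + b (Min J) + u_sum (I - {Min I}) J a b"
  shows "sumset (I - {Min I}) J = sumset I J - {Min I + Min J}"
    and "\<forall>t\<in>sumset (I - {Min I}) J. u_max I J a b t = u_max (I - {Min I}) J a b t"
  using u_sum_remove_Min_right_eq[of J I b a] assms
  by (simp_all add: u_sum_commute[of J] sumset_commute[of J] u_max_commute[of J] add.commute)

lemma u_max_singleton_left:
  assumes "j \<in> J"
  shows "u_max {x} J a b (x + j) = a x + b j"
proof -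
  have "{i \<in> {x}. x + j - i \<in> J} = {x}" using assms by auto
  then show ?thesis by (simp add: u_max_eq_Max_image)
qed

lemma u_sum_singleton_left:
  assumes "finite J" "J \<noteq> {}"
  shows "u_sum {x} J a b = mean_bound {x} J a b"
proof -
  have "sumset {x} J = (\<lambda>j. x + j) ` J" unfolding sumset_def by auto
  then have "u_sum {x} J a b = (\<Sum>j\<in>J. a x + b j)"
    by (simp add: u_sum_def sum.reindex u_max_singleton_left)
  also have "\<dots> = mean_bound {x} J a b"
    using assms by (simp add: mean_bound_def sum.distrib field_simps)
  finally show ?thesis .
qed

lemma mean_bound_remove_average:
  assumes "finite I" "finite J" "x \<in> I" "y \<in> J" "card I \<ge> 2" "card J \<ge> 2"
  shows "(real (card I) + real (card J) - 2) * mean_bound I J a b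
           = (real (card J) - 1) * (a x + b y + mean_bound I (J - {y}) a b)
           + (real (card I) - 1) * (a x + b y + mean_bound (I - {x}) J a b)"
proof -
  define m n A B where "m = real (card I)" and "n = real (card J)" and "A = sum a I" and "B = sum b J"
  have "m > 1" "n > 1" using assms(5,6) by (auto simp: m_def n_def)
  moreover have mb: "mean_bound I J a b = (m + n - 1) * (A / m + B / n)"
    "mean_bound I (J - {y}) a b = (m + (n - 1) - 1) * (A / m + (B - b y) / (n - 1))"
    "mean_bound (I - {x}) J a b = ((m - 1) + n - 1) * ((A - a x) / (m - 1) + B / n)"
    using assms by (simp_all add: mean_bound_def m_def n_def A_def B_def sum_diff1)
  ultimately have "(n - 1) * (a x + b y + mean_bound I (J - {y}) a b - mean_bound I J a b)
      + (m - 1) * (a x + b y + mean_bound (I - {x}) J a b - mean_bound I J a b) = 0"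
    unfolding mb by (simp add: field_simps)
  then show ?thesis by (simp add: m_def n_def algebra_simps)
qed

lemma card_remove_Min:
  assumes "finite I" "card I \<ge> 2"
  shows "I - {Min I} \<noteq> {}" "card (I - {Min I}) < card I"
proof -
  have "I \<noteq> {}" using assms(2) by auto
  then have card_eq: "card (I - {Min I}) = card I - 1" using assms(1) by simp
  then show "card (I - {Min I}) < card I" using assms(2) by simp
  show "I - {Min I} \<noteq> {}" using card_eq assms(2) by (intro notI) simp
qed

theorem u_sum_ge_mean_bound:
  assumes "finite I" "I \<noteq> {}" "finite J" "J \<noteq> {}" "\<forall>i\<in>I. a i \<ge> 0" "\<forall>j\<in>J. b j \<ge> 0"
  shows "mean_bound I J a b \<le> u_sum I J a b"
  using assms
proof (induction "card I + card J" arbitrary: I J rule: less_induct)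
  case less
  have "card I \<noteq> 0" "card J \<noteq> 0" using less.prems by simp_all
  then consider x where "I = {x}" | y where "J = {y}" | "card I \<ge> 2" "card J \<ge> 2"
    by (metis card_1_singleton_iff less_2_cases_iff not_le)
  then show ?case
  proof cases
    case 1
    then show ?thesis using u_sum_singleton_left less.prems by simp
  next
    case 2
    then show ?thesis using u_sum_singleton_left[of I _ b a] less.prems
      by (simp add: u_sum_commute[of I] mean_bound_commute[of I])
  next
    case 3
    let ?x = "Min I" and ?y = "Min J"
    let ?m = "real (card I)" and ?n = "real (card J)" and ?s = "u_sum I J a b"
    have "mean_bound I (J - {?y}) a b \<le> u_sum I (J - {?y}) a b"
      using less.prems card_remove_Min[of J] 3 by (intro less.hyps) auto
    then have right: "a ?x + b ?y + mean_bound I (J - {?y}) a b \<le> ?s"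
      using u_sum_remove_Min_right_ge[OF less.prems] by linarith
    have "mean_bound (I - {?x}) J a b \<le> u_sum (I - {?x}) J a b"
      using less.prems card_remove_Min[of I] 3 by (intro less.hyps) auto
    then have left: "a ?x + b ?y + mean_bound (I - {?x}) J a b \<le> ?s"
      using u_sum_remove_Min_left_ge[OF less.prems] by linarith
    have "(?m + ?n - 2) * mean_bound I J a b
        = (?n - 1) * (a ?x + b ?y + mean_bound I (J - {?y}) a b)
        + (?m - 1) * (a ?x + b ?y + mean_bound (I - {?x}) J a b)"
      using less.prems 3 by (intro mean_bound_remove_average) auto
    also have "\<dots> \<le> (?n - 1) * ?s + (?m - 1) * ?s"
      using right left 3 by (intro add_mono mult_left_mono) auto
    also have "\<dots> = (?m + ?n - 2) * ?s" by (simp add: algebra_simps)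
    finally show ?thesis using 3 by (simp add: mult_le_cancel_left_pos)
  qed
qed

lemma weighted_mean_eq_upper_bound:
  fixes p q s x y :: real
  assumes "p > 0" "q > 0" "(p + q) * s = p * x + q * y" "x \<le> s" "y \<le> s"
  shows "x = s" "y = s"
proof -
  have "p * (s - x) + q * (s - y) = 0" using assms(3) by (simp add: algebra_simps)
  moreover have "p * (s - x) \<ge> 0" "q * (s - y) \<ge> 0" using assms by simp_all
  ultimately have "p * (s - x) = 0" "q * (s - y) = 0" by linarith+
  then show "x = s" "y = s" using assms(1,2) by simp_all
qed

lemma u_sum_eq_mean_bound_remove_Min:
  assumes "finite I" "finite J" "card I \<ge> 2" "card J \<ge> 2" "\<forall>i\<in>I. a i \<ge> 0" "\<forall>j\<in>J. b j \<ge> 0"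
    and "u_sum I J a b = mean_bound I J a b"
  shows "u_sum I (J - {Min J}) a b = mean_bound I (J - {Min J}) a b"
    and "u_sum I J a b = a (Min I) + b (Min J) + u_sum I (J - {Min J}) a b"
    and "u_sum (I - {Min I}) J a b = mean_bound (I - {Min I}) J a b"
    and "u_sum I J a b = a (Min I) + b (Min J) + u_sum (I - {Min I}) J a b"
proof -
  let ?x = "Min I" and ?y = "Min J" and ?s = "u_sum I J a b"
  let ?m = "real (card I)" and ?n = "real (card J)"
  have ne: "I \<noteq> {}" "J \<noteq> {}" "I - {?x} \<noteq> {}" "J - {?y} \<noteq> {}"
    using assms(1-4) card_remove_Min by auto
  have right: "mean_bound I (J - {?y}) a b \<le> u_sum I (J - {?y}) a b"
      "a ?x + b ?y + u_sum I (J - {?y}) a b \<le> ?s"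
    using assms(1,2,5,6) ne by (auto intro!: u_sum_ge_mean_bound u_sum_remove_Min_right_ge)
  have left: "mean_bound (I - {?x}) J a b \<le> u_sum (I - {?x}) J a b"
      "a ?x + b ?y + u_sum (I - {?x}) J a b \<le> ?s"
    using assms(1,2,5,6) ne by (auto intro!: u_sum_ge_mean_bound u_sum_remove_Min_left_ge)
  have "(?m + ?n - 2) * mean_bound I J a b
      = (?n - 1) * (a ?x + b ?y + mean_bound I (J - {?y}) a b)
      + (?m - 1) * (a ?x + b ?y + mean_bound (I - {?x}) J a b)"
    using assms(1-4) ne by (intro mean_bound_remove_average) auto
  then have avg: "((?n - 1) + (?m - 1)) * ?s
      = (?n - 1) * (a ?x + b ?y + mean_bound I (J - {?y}) a b)
      + (?m - 1) * (a ?x + b ?y + mean_bound (I - {?x}) J a b)"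
    using assms(7) by (simp add: algebra_simps)
  have weights: "?n - 1 > 0" "?m - 1 > 0" using assms(3,4) by auto
  have "a ?x + b ?y + mean_bound I (J - {?y}) a b \<le> ?s"
    "a ?x + b ?y + mean_bound (I - {?x}) J a b \<le> ?s"
    using right left by linarith+
  then have "a ?x + b ?y + mean_bound I (J - {?y}) a b = ?s"
    "a ?x + b ?y + mean_bound (I - {?x}) J a b = ?s"
    using weighted_mean_eq_upper_bound[OF weights avg] by blast+
  then show "u_sum I (J - {?y}) a b = mean_bound I (J - {?y}) a b"
    "?s = a ?x + b ?y + u_sum I (J - {?y}) a b"
    "u_sum (I - {?x}) J a b = mean_bound (I - {?x}) J a b"
    "?s = a ?x + b ?y + u_sum (I - {?x}) J a b"
    using right left by linarith+
qed

definition adjacent :: "real set \<Rightarrow> real \<Rightarrow> real \<Rightarrow> bool" where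
  "adjacent I i i' \<longleftrightarrow> i \<in> I \<and> i' \<in> I \<and> i < i' \<and> (\<forall>z\<in>I. \<not> (i < z \<and> z < i'))"

definition matching_steps :: "real set \<Rightarrow> real set \<Rightarrow> (real \<Rightarrow> real) \<Rightarrow> (real \<Rightarrow> real) \<Rightarrow> bool" where
  "matching_steps I J a b \<longleftrightarrow>
     (\<forall>i i' j j'. adjacent I i i' \<longrightarrow> adjacent J j j' \<longrightarrow> i' - i = j' - j \<and> a i' - a i = b j' - b j)"

definition u_max_additive :: "real set \<Rightarrow> real set \<Rightarrow> (real \<Rightarrow> real) \<Rightarrow> (real \<Rightarrow> real) \<Rightarrow> bool" where
  "u_max_additive I J a b \<longleftrightarrow> (\<forall>i\<in>I. \<forall>j\<in>J. u_max I J a b (i + j) = a i + b j)"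

lemma not_adjacent_singleton: "\<not> adjacent {x} i i'"
  by (auto simp: adjacent_def)

lemma adjacent_remove_Min:
  assumes "finite I" "adjacent I i i'" "i \<noteq> Min I"
  shows "adjacent (I - {Min I}) i i'"
proof -
  have "Min I \<le> i" using assms(1,2) by (simp add: adjacent_def)
  then show ?thesis using assms(2,3) by (auto simp: adjacent_def)
qed

lemma matching_steps_commute: "matching_steps I J a b \<longleftrightarrow> matching_steps J I b a"
  unfolding matching_steps_def by (metis)

lemma u_max_additive_commute: "u_max_additive I J a b \<longleftrightarrow> u_max_additive J I b a"
  unfolding u_max_additive_def u_max_commute[of I] by (metis add.commute)

lemma u_max_additive_singleton_left: "u_max_additive {x} J a b"
  by (simp add: u_max_additive_def u_max_singleton_left)

lemma Min_add_adjacent_le: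
  assumes "finite I" "finite J" "adjacent I (Min I) i'" "adjacent J (Min J) j'"
    and "sumset I (J - {Min J}) \<subseteq> sumset (I - {Min I}) J"
  shows "i' + Min J \<le> Min I + j'"
proof -
  have "Min I + j' \<in> sumset I (J - {Min J})"
    using assms(3,4) by (auto simp: adjacent_def sumset_def)
  then have "Min I + j' \<in> sumset (I - {Min I}) J" using assms(5) by blast
  then obtain p q where pq: "p \<in> I" "p \<noteq> Min I" "q \<in> J" "Min I + j' = p + q"
    by (auto simp: sumset_def)
  have "Min I < p" using assms(1) pq(1,2) by (simp add: order_le_neq_trans)
  then have "i' \<le> p" using assms(3) pq(1) by (auto simp: adjacent_def not_less)
  moreover have "Min J \<le> q" using assms(2) pq(3) by simp
  ultimately show ?thesis using pq(4) by linarith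
qed

lemma u_max_additive_remove_Min:
  assumes "finite I" "I \<noteq> {}" "finite J" "J \<noteq> {}"
    and "\<forall>t\<in>sumset I (J - {Min J}). u_max I J a b t = u_max I (J - {Min J}) a b t"
    and "\<forall>t\<in>sumset (I - {Min I}) J. u_max I J a b t = u_max (I - {Min I}) J a b t"
    and "u_max_additive I (J - {Min J}) a b" "u_max_additive (I - {Min I}) J a b"
  shows "u_max_additive I J a b"
  unfolding u_max_additive_def
proof (intro ballI)
  fix i j assume ij: "i \<in> I" "j \<in> J"
  consider "j \<noteq> Min J" | "i \<noteq> Min I" | "i = Min I" "j = Min J" by blast
  then show "u_max I J a b (i + j) = a i + b j"
  proof cases
    case 1
    then have "i + j \<in> sumset I (J - {Min J})" using ij by (auto simp: sumset_def)
    then show ?thesis using assms(5,7) ij 1 by (simp add: u_max_additive_def)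
  next
    case 2
    then have "i + j \<in> sumset (I - {Min I}) J" using ij by (auto simp: sumset_def)
    then show ?thesis using assms(6,8) ij 2 by (simp add: u_max_additive_def)
  next
    case 3
    then show ?thesis using assms(1-4) by (simp add: u_max_Min_Min)
  qed
qed

lemma matching_steps_remove_Min:
  assumes "finite I" "finite J"
    and "sumset I (J - {Min J}) = sumset (I - {Min I}) J"
    and "u_max_additive I J a b"
    and "matching_steps I (J - {Min J}) a b" "matching_steps (I - {Min I}) J a b"
  shows "matching_steps I J a b"
  unfolding matching_steps_def
proof (intro allI impI)
  fix i i' j j' assume adj: "adjacent I i i'" "adjacent J j j'"
  consider "j \<noteq> Min J" | "i \<noteq> Min I" | "i = Min I" "j = Min J" by blast
  then show "i' - i = j' - j \<and> a i' - a i = b j' - b j"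
  proof cases
    case 1
    then show ?thesis using assms(2,5) adj adjacent_remove_Min by (auto simp: matching_steps_def)
  next
    case 2
    then show ?thesis using assms(1,6) adj adjacent_remove_Min by (auto simp: matching_steps_def)
  next
    case 3
    txt \<open>Both removals leave the same sumset, so the second-smallest sums \<open>Min I + j'\<close> and
      \<open>i' + Min J\<close> coincide.\<close>
    have "i' + Min J \<le> Min I + j'"
      using adj 3 assms(1-3) by (intro Min_add_adjacent_le) auto
    moreover have "j' + Min I \<le> Min J + i'"
      using adj 3 assms(1-3) Min_add_adjacent_le[of J I j' i'] by (simp add: sumset_commute)
    ultimately have sums: "Min I + j' = i' + Min J" by linarith
    have "a (Min I) + b j' = a i' + b (Min J)"
      using assms(4) adj 3 sums unfolding u_max_additive_def adjacent_def by metis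
    then show ?thesis using sums 3 by simp
  qed
qed

theorem additive_matching_if_u_sum_eq_mean_bound:
  assumes "finite I" "I \<noteq> {}" "finite J" "J \<noteq> {}" "\<forall>i\<in>I. a i > 0" "\<forall>j\<in>J. b j > 0"
    and "u_sum I J a b = mean_bound I J a b"
  shows "u_max_additive I J a b \<and> matching_steps I J a b"
  using assms
proof (induction "card I + card J" arbitrary: I J rule: less_induct)
  case less
  note fin = less.prems(1-4) and pos = less.prems(5,6)
  have nonneg: "\<forall>i\<in>I. a i \<ge> 0" "\<forall>j\<in>J. b j \<ge> 0" using pos by (simp_all add: less_imp_le)
  have "card I \<noteq> 0" "card J \<noteq> 0" using fin by simp_all
  then consider x where "I = {x}" | y where "J = {y}" | "card I \<ge> 2" "card J \<ge> 2"
    by (metis card_1_singleton_iff less_2_cases_iff not_le)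
  then show ?case
  proof cases
    case 1
    then show ?thesis
      by (simp add: u_max_additive_singleton_left matching_steps_def not_adjacent_singleton)
  next
    case 2
    then show ?thesis
      by (simp add: u_max_additive_commute[of I] matching_steps_commute[of I]
          u_max_additive_singleton_left matching_steps_def not_adjacent_singleton)
  next
    case 3
    let ?x = "Min I" and ?y = "Min J"
    note tight = u_sum_eq_mean_bound_remove_Min[OF fin(1,3) 3 nonneg less.prems(7)]
    have sub_right: "finite (J - {?y})" "J - {?y} \<noteq> {}" "card I + card (J - {?y}) < card I + card J"
      using fin card_remove_Min[of J] 3 by auto
    have sub_left: "finite (I - {?x})" "I - {?x} \<noteq> {}" "card (I - {?x}) + card J < card I + card J"
      using fin card_remove_Min[of I] 3 by auto
    have IH_right: "u_max_additive I (J - {?y}) a b \<and> matching_steps I (J - {?y}) a b"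
      using fin sub_right pos tight(1) by (intro less.hyps) auto
    have IH_left: "u_max_additive (I - {?x}) J a b \<and> matching_steps (I - {?x}) J a b"
      using fin sub_left pos tight(3) by (intro less.hyps) auto
    note peel_right = u_sum_remove_Min_right_eq[OF fin pos tight(2)]
    note peel_left = u_sum_remove_Min_left_eq[OF fin pos tight(4)]
    have additive: "u_max_additive I J a b"
      using u_max_additive_remove_Min[OF fin peel_right(2) peel_left(2)] IH_right IH_left by blast
    have "sumset I (J - {?y}) = sumset (I - {?x}) J"
      using peel_right(1) peel_left(1) by simp
    then have "matching_steps I J a b"
      using matching_steps_remove_Min[OF fin(1,3) _ additive] IH_right IH_left by blast
    with additive show ?thesis ..
  qed
qed

lemma adjacent_nth_sorted_list_of_set:
  assumes "finite I" "Suc k < card I"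
  shows "adjacent I (sorted_list_of_set I ! k) (sorted_list_of_set I ! Suc k)"
proof -
  let ?xs = "sorted_list_of_set I"
  have sorted: "sorted_wrt (<) ?xs" and set: "set ?xs = I" and len: "length ?xs = card I"
    using assms(1) by simp_all
  have less: "?xs ! p < ?xs ! q" if "p < q" "q < card I" for p q
    using sorted_wrt_nth_less[OF sorted] that len by simp
  have between: "\<not> (?xs ! k < ?xs ! p \<and> ?xs ! p < ?xs ! Suc k)" if "p < card I" for p
  proof (cases "p \<le> k")
    case True
    then have "?xs ! p \<le> ?xs ! k" using less[of p k] assms(2) by (cases "p = k") simp_all
    then show ?thesis by simp
  next
    case False
    then have "?xs ! Suc k \<le> ?xs ! p" using less[of "Suc k" p] that by (cases "p = Suc k") simp_all
    then show ?thesis by simp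
  qed
  have mem: "?xs ! p \<in> I" if "p < card I" for p
    using nth_mem[of p ?xs] that len set by simp
  show ?thesis unfolding adjacent_def
  proof (intro conjI ballI)
    show "?xs ! k \<in> I" "?xs ! Suc k \<in> I" using mem assms(2) by simp_all
    show "?xs ! k < ?xs ! Suc k" using less assms(2) by simp
    fix z assume "z \<in> I"
    then have "z \<in> set ?xs" using set by simp
    then obtain p where "p < card I" "z = ?xs ! p" using len by (auto simp: in_set_conv_nth)
    then show "\<not> (?xs ! k < z \<and> z < ?xs ! Suc k)" using between by simp
  qed
qed

lemma progression_if_adjacent_steps:
  fixes f :: "real \<Rightarrow> real"
  assumes "finite I" "I \<noteq> {}"
    and steps: "\<And>i i'. adjacent I i i' \<Longrightarrow> i' - i = d \<and> f i' - f i = e"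
  shows "I = {Min I + real k * d | k. k < card I}"
    and "\<forall>k<card I. f (Min I + real k * d) = f (Min I) + real k * e"
proof -
  let ?xs = "sorted_list_of_set I"
  have nth: "?xs ! k = Min I + real k * d \<and> f (?xs ! k) = f (Min I) + real k * e"
    if "k < card I" for k
    using that
  proof (induction k)
    case 0
    then show ?case using assms(1,2) by (simp add: sorted_list_of_set_nonempty)
  next
    case (Suc k)
    then have "?xs ! Suc k = ?xs ! k + d" "f (?xs ! Suc k) = f (?xs ! k) + e"
      using steps adjacent_nth_sorted_list_of_set[OF assms(1)] by force+
    moreover have "?xs ! k = Min I + real k * d \<and> f (?xs ! k) = f (Min I) + real k * e"
      using Suc.prems by (intro Suc.IH) simp
    ultimately show ?case by (auto simp: algebra_simps)
  qed
  have "I = set ?xs" using assms(1) by simp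
  also have "\<dots> = {?xs ! k | k. k < card I}" by (simp only: set_conv_nth length_sorted_list_of_set)
  also have "\<dots> = {Min I + real k * d | k. k < card I}" using nth by force
  finally show "I = {Min I + real k * d | k. k < card I}" .
  show "\<forall>k<card I. f (Min I + real k * d) = f (Min I) + real k * e" using nth by force
qed

lemma adjacent_exists:
  assumes "finite I" "card I \<ge> 2"
  obtains i i' where "adjacent I i i'"
  using adjacent_nth_sorted_list_of_set[of I 0] assms by auto

definition common_progressions :: "real set \<Rightarrow> real set \<Rightarrow> (real \<Rightarrow> real) \<Rightarrow> (real \<Rightarrow> real) \<Rightarrow> bool" where
  "common_progressions I J a b \<longleftrightarrow>
     (\<exists>x0 y0 d \<alpha> \<beta> e :: real. d > 0 \<and>
        I = {x0 + real k * d | k. k < card I} \<and>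
        J = {y0 + real k * d | k. k < card J} \<and>
        (\<forall>k < card I. a (x0 + real k * d) = \<alpha> + real k * e) \<and>
        (\<forall>k < card J. b (y0 + real k * d) = \<beta> + real k * e))"

lemma common_progressions_if_matching_steps:
  assumes "finite I" "finite J" "card I \<ge> 2" "card J \<ge> 2" "matching_steps I J a b"
  shows "common_progressions I J a b"
proof -
  obtain i0 i1 where adj_I: "adjacent I i0 i1" using adjacent_exists assms(1,3) .
  obtain j0 j1 where adj_J: "adjacent J j0 j1" using adjacent_exists assms(2,4) .
  define d e where "d = j1 - j0" and "e = b j1 - b j0"
  have steps_I: "i' - i = d \<and> a i' - a i = e" if "adjacent I i i'" for i i'
    using assms(5) that adj_J unfolding matching_steps_def d_def e_def by blast
  have steps_J: "j' - j = d \<and> b j' - b j = e" if "adjacent J j j'" for j j'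
    using assms(5) that adj_I steps_I[OF adj_I] unfolding matching_steps_def by metis
  have "d > 0" using adj_J by (simp add: adjacent_def d_def)
  moreover have "I \<noteq> {}" "J \<noteq> {}" using assms(3,4) by auto
  ultimately show ?thesis
    using progression_if_adjacent_steps[OF assms(1) _ steps_I]
      progression_if_adjacent_steps[OF assms(2) _ steps_J]
    unfolding common_progressions_def by blast
qed

lemma sum_arith_progression: "(\<Sum>k<N. c + real k * e) = real N * c + e * real N * (real N - 1) / 2"
  by (induction N) (simp_all add: field_simps)

lemma progression_eq_image: "{x0 + real k * d | k. k < N} = (\<lambda>k. x0 + real k * d) ` {..<N}"
  by auto

lemma inj_on_progression: "d \<noteq> 0 \<Longrightarrow> inj_on (\<lambda>k. x0 + real k * d) A"
  by (auto simp: inj_on_def)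

lemma sumset_progressions:
  assumes "m \<ge> 1" "n \<ge> 1"
  shows "sumset {x0 + real k * d | k. k < m} {y0 + real k * d | k. k < n}
           = {x0 + y0 + real k * d | k. k < m + n - 1}"
proof (intro equalityI subsetI)
  fix t assume "t \<in> sumset {x0 + real k * d | k. k < m} {y0 + real k * d | k. k < n}"
  then obtain p q where "p < m" "q < n" "t = x0 + real p * d + (y0 + real q * d)"
    by (auto simp: sumset_def)
  then have "p + q < m + n - 1" "t = x0 + y0 + real (p + q) * d" by (auto simp: algebra_simps)
  then show "t \<in> {x0 + y0 + real k * d | k. k < m + n - 1}" by blast
next
  fix t assume "t \<in> {x0 + y0 + real k * d | k. k < m + n - 1}"
  then obtain k where k: "k < m + n - 1" "t = x0 + y0 + real k * d" by blast
  define p where "p = min k (m - 1)"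
  have p: "p < m" "k - p < n" "p \<le> k" using k(1) assms unfolding p_def by linarith+
  then have "t = (x0 + real p * d) + (y0 + real (k - p) * d)"
    using k(2) by (simp add: algebra_simps)
  moreover have "x0 + real p * d \<in> {x0 + real k * d | k. k < m}"
    "y0 + real (k - p) * d \<in> {y0 + real k * d | k. k < n}" using p by blast+
  ultimately show "t \<in> sumset {x0 + real k * d | k. k < m} {y0 + real k * d | k. k < n}"
    unfolding sumset_def by blast
qed

lemma u_max_progressions:
  assumes "d > 0" "m \<ge> 1" "n \<ge> 1" "k < m + n - 1"
    and a: "\<forall>k<m. a (x0 + real k * d) = \<alpha> + real k * e"
    and b: "\<forall>k<n. b (y0 + real k * d) = \<beta> + real k * e"
  shows "u_max {x0 + real k * d | k. k < m} {y0 + real k * d | k. k < n} a b (x0 + y0 + real k * d)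
           = \<alpha> + \<beta> + real k * e"
proof -
  let ?I = "{x0 + real k * d | k. k < m}" and ?J = "{y0 + real k * d | k. k < n}"
  let ?t = "x0 + y0 + real k * d"
  have "finite ?I" by (simp add: progression_eq_image)
  moreover have "?t \<in> sumset ?I ?J"
    unfolding sumset_progressions[OF assms(2,3)] using assms(4) by blast
  ultimately obtain i where i: "i \<in> ?I" "?t - i \<in> ?J" "u_max ?I ?J a b ?t = a i + b (?t - i)"
    by (rule u_max_attained)
  obtain p q where pq: "p < m" "i = x0 + real p * d" "q < n" "?t - i = y0 + real q * d"
    using i(1,2) by blast
  then have "(real k - real p - real q) * d = 0" by (simp add: algebra_simps)
  then have "real k = real p + real q" using assms(1) by simp
  then show ?thesis using i(3) pq a b by (simp add: algebra_simps)
qed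

lemma u_sum_progressions:
  assumes "d > 0" "m \<ge> 1" "n \<ge> 1"
    and a: "\<forall>k<m. a (x0 + real k * d) = \<alpha> + real k * e"
    and b: "\<forall>k<n. b (y0 + real k * d) = \<beta> + real k * e"
  shows "u_sum {x0 + real k * d | k. k < m} {y0 + real k * d | k. k < n} a b
           = mean_bound {x0 + real k * d | k. k < m} {y0 + real k * d | k. k < n} a b"
proof -
  let ?I = "{x0 + real k * d | k. k < m}" and ?J = "{y0 + real k * d | k. k < n}"
  have inj: "inj_on (\<lambda>k. z + real k * d) A" for z A using assms(1) by (simp add: inj_on_progression)
  have card: "card ?I = m" "card ?J = n"
    by (simp_all add: progression_eq_image card_image[OF inj])
  have sums: "sum a ?I = (\<Sum>k<m. \<alpha> + real k * e)" "sum b ?J = (\<Sum>k<n. \<beta> + real k * e)"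
    using a b by (simp_all add: progression_eq_image sum.reindex[OF inj])
  have "mean_bound ?I ?J a b = (real m + real n - 1)
      * ((\<Sum>k<m. \<alpha> + real k * e) / real m + (\<Sum>k<n. \<beta> + real k * e) / real n)"
    unfolding mean_bound_def card sums ..
  also have "\<dots> = (real m + real n - 1) * ((\<alpha> + \<beta>) + e * (real m + real n - 2) / 2)"
    using assms(2,3) unfolding sum_arith_progression by (simp add: field_simps)
  also have "\<dots> = (\<Sum>k<m + n - 1. \<alpha> + \<beta> + real k * e)"
    using assms(2,3) unfolding sum_arith_progression by (simp add: field_simps)
  also have "\<dots> = (\<Sum>k<m + n - 1. u_max ?I ?J a b (x0 + y0 + real k * d))"
    using u_max_progressions[OF assms(1-3) _ a b] by simp
  also have "\<dots> = u_sum ?I ?J a b"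
    unfolding u_sum_def sumset_progressions[OF assms(2,3)] progression_eq_image[of "x0 + y0"]
    by (simp add: sum.reindex[OF inj])
  finally show ?thesis ..
qed

lemma u_sum_eq_mean_bound_iff:
  assumes "finite I" "finite J" "card I \<ge> 2" "card J \<ge> 2" "\<forall>i\<in>I. a i > 0" "\<forall>j\<in>J. b j > 0"
  shows "u_sum I J a b = mean_bound I J a b \<longleftrightarrow> common_progressions I J a b"
proof
  have "I \<noteq> {}" "J \<noteq> {}" using assms(3,4) by auto
  moreover assume "u_sum I J a b = mean_bound I J a b"
  ultimately have "matching_steps I J a b"
    using additive_matching_if_u_sum_eq_mean_bound[of I J a b] assms(1,2,5,6) by simp
  then show "common_progressions I J a b"
    using assms(1-4) by (intro common_progressions_if_matching_steps)
next
  assume "common_progressions I J a b"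
  then obtain x0 y0 d \<alpha> \<beta> e where "d > 0"
    and I: "I = {x0 + real k * d | k. k < card I}" and J: "J = {y0 + real k * d | k. k < card J}"
    and "\<forall>k < card I. a (x0 + real k * d) = \<alpha> + real k * e"
    and "\<forall>k < card J. b (y0 + real k * d) = \<beta> + real k * e"
    unfolding common_progressions_def by (elim exE conjE) (rule that; assumption)
  moreover have "card I \<ge> 1" "card J \<ge> 1" using assms(3,4) by simp_all
  ultimately have "u_sum {x0 + real k * d | k. k < card I} {y0 + real k * d | k. k < card J} a b
      = mean_bound {x0 + real k * d | k. k < card I} {y0 + real k * d | k. k < card J} a b"
    by (intro u_sum_progressions)
  then show "u_sum I J a b = mean_bound I J a b" unfolding I[symmetric] J[symmetric] .
qed

theorem lemma2p4:
  fixes I J :: "real set" and a b :: "real \<Rightarrow> real"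
  assumes "finite I" "I \<noteq> {}" "finite J" "J \<noteq> {}"
    and "\<forall>i\<in>I. a i \<ge> 0" and "\<forall>j\<in>J. b j \<ge> 0"
  shows "(1 / (real (card I) + real (card J) - 1)) * (\<Sum>t\<in>sumset I J. u_max I J a b t)
           \<ge> (1 / real (card I)) * (\<Sum>i\<in>I. a i) + (1 / real (card J)) * (\<Sum>j\<in>J. b j)
     \<and> (min (card I) (card J) \<ge> 2 \<longrightarrow> (\<forall>i\<in>I. a i > 0) \<longrightarrow> (\<forall>j\<in>J. b j > 0) \<longrightarrow>
         ((1 / (real (card I) + real (card J) - 1)) * (\<Sum>t\<in>sumset I J. u_max I J a b t)
            = (1 / real (card I)) * (\<Sum>i\<in>I. a i) + (1 / real (card J)) * (\<Sum>j\<in>J. b j)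
          \<longleftrightarrow>
          (\<exists>x0 y0 d \<alpha> \<beta> e :: real. d > 0 \<and>
             I = {x0 + real k * d | k. k < card I} \<and>
             J = {y0 + real k * d | k. k < card J} \<and>
             (\<forall>k < card I. a (x0 + real k * d) = \<alpha> + real k * e) \<and>
             (\<forall>k < card J. b (y0 + real k * d) = \<beta> + real k * e))))"
proof -
  define c where "c = real (card I) + real (card J) - 1"
  define X where "X = (1 / real (card I)) * (\<Sum>i\<in>I. a i) + (1 / real (card J)) * (\<Sum>j\<in>J. b j)"
  have "card I \<noteq> 0" "card J \<noteq> 0" using assms(1-4) by simp_all
  then have "c > 0" by (simp add: c_def)
  moreover have "mean_bound I J a b = c * X" by (simp add: mean_bound_def c_def X_def)
  moreover have "mean_bound I J a b \<le> u_sum I J a b" using assms by (rule u_sum_ge_mean_bound)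
  moreover have "min (card I) (card J) \<ge> 2 \<Longrightarrow> \<forall>i\<in>I. a i > 0 \<Longrightarrow> \<forall>j\<in>J. b j > 0 \<Longrightarrow>
      u_sum I J a b = mean_bound I J a b \<longleftrightarrow> common_progressions I J a b"
    using assms(1,3) by (intro u_sum_eq_mean_bound_iff) auto
  ultimately show ?thesis
    unfolding u_sum_def[symmetric] common_progressions_def[symmetric] c_def[symmetric] X_def[symmetric]
    by (auto simp: field_simps)
qed

end
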